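(* For every 5-complex number $u$, $$e^u=e_+e^{v_+}+e^{v_1}\left(e_1\cos\tilde v_1+\tilde e_1\sin\tilde v_1\right)+e^{v_2}\left(e_2\cos\tilde v_2+\tilde e_2\sin\tilde v_2\right),$$ where $e^u=\sum_{n\ge0}u^n/n!$.
   Context: A 5-complex number is $u=x_0+h_1x_1+h_2x_2+h_3x_3+h_4x_4$ with real $x_j$, with componentwise addition and the commutative associative bilinear multiplication determined by $h_jh_k=h_{(j+k)\bmod 5}$, $h_0=1$. Canonical variables: $v_+=\sum_jx_j$ and, for $k=1,2$, $v_k=\sum_jx_j\cos(2\pi kj/5)$, $\tilde v_k=\sum_jx_j\sin(2\pi kj/5)$. Canonical basis (with $h_0=1$): $e_+=\frac15\sum_{j=0}^4h_j$, and for $k=1,2$: $e_k=\frac25\sum_{j=0}^4\cos(2\pi kj/5)h_j$, $\tilde e_k=\frac25\sum_{j=0}^4\sin(2\pi kj/5)h_j$. *)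

theory Defs
  imports "HOL-Analysis.Analysis" "HOL-Library.Numeral_Type"
begin

text \<open>A 5-complex number u = x0 + h1 x1 + ... + h4 x4 is represented by its
  coefficient vector in real^5, indexed by the ring Z/5Z (numeral type 5).\<close>

type_synonym tc5 = "real ^ 5"

definition comp5 :: "tc5 \<Rightarrow> nat \<Rightarrow> real" where
  "comp5 u j = u $ (of_nat j :: 5)"

definition hb :: "nat \<Rightarrow> tc5" where
  "hb j = (\<chi> k. if k = (of_nat j :: 5) then 1 else 0)"

text \<open>Multiplication determined bilinearly by h_j h_k = h_((j+k) mod 5).\<close>
definition mul5 :: "tc5 \<Rightarrow> tc5 \<Rightarrow> tc5" where
  "mul5 u v = (\<chi> k. \<Sum>i\<in>UNIV. u $ i * v $ (k - i))"

primrec pow5 :: "tc5 \<Rightarrow> nat \<Rightarrow> tc5" where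
  "pow5 u 0 = hb 0"
| "pow5 u (Suc n) = mul5 u (pow5 u n)"

definition vplus :: "tc5 \<Rightarrow> real" where
  "vplus u = (\<Sum>j<5. comp5 u j)"

definition vk :: "nat \<Rightarrow> tc5 \<Rightarrow> real" where
  "vk k u = (\<Sum>j<5. comp5 u j * cos (2 * pi * real k * real j / 5))"

definition vtk :: "nat \<Rightarrow> tc5 \<Rightarrow> real" where
  "vtk k u = (\<Sum>j<5. comp5 u j * sin (2 * pi * real k * real j / 5))"

definition eplus :: tc5 where
  "eplus = (1/5) *\<^sub>R (\<Sum>j<5. hb j)"

definition ek :: "nat \<Rightarrow> tc5" where
  "ek k = (2/5) *\<^sub>R (\<Sum>j<5. cos (2 * pi * real k * real j / 5) *\<^sub>R hb j)"

definition etk :: "nat \<Rightarrow> tc5" where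
  "etk k = (2/5) *\<^sub>R (\<Sum>j<5. sin (2 * pi * real k * real j / 5) *\<^sub>R hb j)"

end

theory Submission
  imports Defs
begin

text \<open>Let \<omega> = exp(2\<pi>i/5). For each k the map w \<mapsto> \<Sum>j. x_j \<omega>^(kj) is a real-linear ring
  homomorphism from the 5-complex numbers to \<complex>, because h_j \<mapsto> \<omega>^(kj) respects
  h_j h_l = h_((j+l) mod 5); its real and imaginary parts are v_k and \<tilde>v_k. It therefore maps
  the exponential series of u to the complex exponential series of v_k + i \<tilde>v_k, so the
  canonical variables of the partial sums converge to e^v_+, e^v_k cos \<tilde>v_k and
  e^v_k sin \<tilde>v_k. Every 5-complex number is the combination of the canonical basis with
  its canonical variables as coefficients (discrete Fourier inversion), which gives the formula.\<close>

lemma exhaust_5: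
  fixes x :: 5
  shows "x = 0 \<or> x = 1 \<or> x = 2 \<or> x = 3 \<or> x = 4"
proof (induct x)
  case (of_int z)
  then have "z = 0 \<or> z = 1 \<or> z = 2 \<or> z = 3 \<or> z = 4" by fastforce
  then show ?case by auto
qed

lemma forall_5: "(\<forall>i::5. P i) \<longleftrightarrow> P 0 \<and> P 1 \<and> P 2 \<and> P 3 \<and> P 4"
  by (metis exhaust_5)

lemma UNIV_5: "UNIV = {0, 1, 2, 3, 4::5}"
  using exhaust_5 by auto

lemma sum_5: "sum f (UNIV::5 set) = f 0 + f 1 + f 2 + f 3 + f 4"
  unfolding UNIV_5 by (simp add: ac_simps)

lemma sum_lessThan_5: "(\<Sum>j<5::nat. f j) = f 0 + f 1 + f 2 + f 3 + f 4"
  by (simp add: eval_nat_numeral)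

lemma hb_nth: "hb j $ m = (if m = of_nat j then 1 else 0)"
  unfolding hb_def by simp

lemma numerals_mod_5:
  "(5::5) = 0" "(6::5) = 1" "(7::5) = 2" "(8::5) = 3" "(9::5) = 4"
  "(-1::5) = 4" "(-2::5) = 3" "(-3::5) = 2" "(-4::5) = 1"
  by (simp_all add: minus_equation_iff)

lemma mul5_nth:
  fixes u v :: tc5
  shows "mul5 u v $ 0 = u$0 * v$0 + u$1 * v$4 + u$2 * v$3 + u$3 * v$2 + u$4 * v$1"
    and "mul5 u v $ 1 = u$0 * v$1 + u$1 * v$0 + u$2 * v$4 + u$3 * v$3 + u$4 * v$2"
    and "mul5 u v $ 2 = u$0 * v$2 + u$1 * v$1 + u$2 * v$0 + u$3 * v$4 + u$4 * v$3"
    and "mul5 u v $ 3 = u$0 * v$3 + u$1 * v$2 + u$2 * v$1 + u$3 * v$0 + u$4 * v$4"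
    and "mul5 u v $ 4 = u$0 * v$4 + u$1 * v$3 + u$2 * v$2 + u$3 * v$1 + u$4 * v$0"
  unfolding mul5_def by (simp_all only: vec_lambda_beta sum_5) (simp_all add: numerals_mod_5)

definition char5 :: "nat \<Rightarrow> tc5 \<Rightarrow> complex" where
  "char5 k w = (\<Sum>j<5. of_real (comp5 w j) * cis (2 * pi * real k / 5) ^ j)"

lemma char5_eq_Complex: "char5 k w = Complex (vk k w) (vtk k w)"
proof -
  have "cis (2 * pi * real k / 5) ^ j = cis (2 * pi * real k * real j / 5)" for j
    unfolding Complex.DeMoivre by (simp add: mult_ac)
  then show ?thesis
    by (simp add: complex_eq_iff char5_def vk_def vtk_def Re_sum Im_sum)
qed

lemma char5_explicit:
  "char5 k w = of_real (w$0) + of_real (w$1) * cis (2 * pi * real k / 5)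
     + of_real (w$2) * cis (2 * pi * real k / 5) ^ 2 + of_real (w$3) * cis (2 * pi * real k / 5) ^ 3
     + of_real (w$4) * cis (2 * pi * real k / 5) ^ 4"
  unfolding char5_def sum_lessThan_5 comp5_def by simp

lemma char5_scaleR: "char5 k (c *\<^sub>R w) = of_real c * char5 k w"
  unfolding char5_def comp5_def by (simp add: sum_distrib_left mult.assoc)

lemma char5_one: "char5 k (hb 0) = 1"
  unfolding char5_def comp5_def hb_def by (simp add: eval_nat_numeral)

lemma mult_mod_x5_minus_1:
  fixes z :: complex
  assumes "z ^ 5 = 1"
  shows "(a0 + a1*z + a2*z^2 + a3*z^3 + a4*z^4) * (b0 + b1*z + b2*z^2 + b3*z^3 + b4*z^4) =
    (a0*b0 + a1*b4 + a2*b3 + a3*b2 + a4*b1) + (a0*b1 + a1*b0 + a2*b4 + a3*b3 + a4*b2)*z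
    + (a0*b2 + a1*b1 + a2*b0 + a3*b4 + a4*b3)*z^2 + (a0*b3 + a1*b2 + a2*b1 + a3*b0 + a4*b4)*z^3
    + (a0*b4 + a1*b3 + a2*b2 + a3*b1 + a4*b0)*z^4"
  using assms by algebra

lemma char5_mul5: "char5 k (mul5 u v) = char5 k u * char5 k v"
proof -
  define z where "z = cis (2 * pi * real k / 5)"
  have "real 5 * (2 * pi * real k / 5) = 2 * pi * real k"
    by simp
  then have z5: "z ^ 5 = 1"
    unfolding z_def Complex.DeMoivre by (simp only:) simp
  show ?thesis
    unfolding char5_explicit z_def[symmetric] mult_mod_x5_minus_1[OF z5] mul5_nth
      of_real_add of_real_mult ..
qed

lemma char5_pow5: "char5 k (pow5 u n) = char5 k u ^ n"
  by (induction n) (simp_all add: char5_one char5_mul5)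

lemma exp_series_canonical_variables:
  "(\<lambda>n. vk k ((1 / fact n) *\<^sub>R pow5 u n)) sums (exp (vk k u) * cos (vtk k u))"
  "(\<lambda>n. vtk k ((1 / fact n) *\<^sub>R pow5 u n)) sums (exp (vk k u) * sin (vtk k u))"
proof -
  have series_term: "char5 k ((1 / fact n) *\<^sub>R pow5 u n) = char5 k u ^ n /\<^sub>R fact n" for n
    unfolding char5_scaleR char5_pow5 by (simp add: scaleR_conv_of_real field_simps)
  have "(\<lambda>n. char5 k ((1 / fact n) *\<^sub>R pow5 u n)) sums exp (char5 k u)"
    unfolding series_term by (rule exp_converges)
  from sums_Re[OF this] sums_Im[OF this] show
    "(\<lambda>n. vk k ((1 / fact n) *\<^sub>R pow5 u n)) sums (exp (vk k u) * cos (vtk k u))"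
    "(\<lambda>n. vtk k ((1 / fact n) *\<^sub>R pow5 u n)) sums (exp (vk k u) * sin (vtk k u))"
    by (simp_all add: char5_eq_Complex Re_exp Im_exp)
qed

definition c1 :: real where "c1 = cos (2 * pi / 5)"
definition s1 :: real where "s1 = sin (2 * pi / 5)"
definition c2 :: real where "c2 = cos (4 * pi / 5)"
definition s2 :: real where "s2 = sin (4 * pi / 5)"

lemma cos_sin_fifth_turns:
  "cos (6 * pi / 5) = c2" "sin (6 * pi / 5) = - s2"
  "cos (8 * pi / 5) = c1" "sin (8 * pi / 5) = - s1"
  "cos (12 * pi / 5) = c1" "sin (12 * pi / 5) = s1"
  "cos (16 * pi / 5) = c2" "sin (16 * pi / 5) = - s2"
proof -
  have turns: "6 * pi / 5 = 2 * pi - 4 * pi / 5" "8 * pi / 5 = 2 * pi - 2 * pi / 5"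
    "12 * pi / 5 = 2 * pi / 5 + 2 * pi" "16 * pi / 5 = (2 * pi - 4 * pi / 5) + 2 * pi"
    by simp_all
  show "cos (6 * pi / 5) = c2" "sin (6 * pi / 5) = - s2"
    "cos (8 * pi / 5) = c1" "sin (8 * pi / 5) = - s1"
    "cos (12 * pi / 5) = c1" "sin (12 * pi / 5) = s1"
    "cos (16 * pi / 5) = c2" "sin (16 * pi / 5) = - s2"
    unfolding turns c1_def c2_def s1_def s2_def
    by (simp_all only: cos_periodic sin_periodic cos_2pi_minus sin_2pi_minus)
qed

lemma c2_double: "c2 = 2 * c1\<^sup>2 - 1"
  and s2_double: "s2 = 2 * s1 * c1"
  and c1_s1_pythagoras: "c1\<^sup>2 + s1\<^sup>2 = 1"
proof -
  have double: "4 * pi / 5 = 2 * (2 * pi / 5)"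
    by simp
  show "c2 = 2 * c1\<^sup>2 - 1"
    unfolding c2_def c1_def double by (rule cos_double_cos)
  show "s2 = 2 * s1 * c1"
    unfolding s2_def s1_def c1_def double by (rule sin_double)
  show "c1\<^sup>2 + s1\<^sup>2 = 1"
    unfolding s1_def c1_def by simp
qed

lemma sum_cos_fifth_roots: "1 + 2 * c1 + 2 * c2 = 0"
proof -
  define z where "z = cis (2 * pi / 5)"
  have "s1 > 0"
    unfolding s1_def by (rule sin_gt_zero) auto
  then have "z \<noteq> 1"
    unfolding z_def s1_def by (auto simp: complex_eq_iff)
  moreover have "z ^ 5 = 1"
    unfolding z_def Complex.DeMoivre by simp
  then have "(z - 1) * (1 + z + z^2 + z^3 + z^4) = 0"
    by algebra
  ultimately have "Re (1 + z + z^2 + z^3 + z^4) = 0"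
    by simp
  moreover have "Re (1 + z + z^2 + z^3 + z^4) =
      1 + cos (2 * pi / 5) + cos (4 * pi / 5) + cos (6 * pi / 5) + cos (8 * pi / 5)"
    unfolding z_def Complex.DeMoivre by simp
  ultimately show ?thesis
    unfolding cos_sin_fifth_turns c1_def c2_def by simp
qed

lemma c1_quadratic: "4 * c1\<^sup>2 + 2 * c1 - 1 = 0"
  using sum_cos_fifth_roots c2_double by simp

lemma vplus_explicit: "vplus w = w$0 + w$1 + w$2 + w$3 + w$4"
  unfolding vplus_def comp5_def sum_lessThan_5 by simp

lemma vk_explicit:
  "vk 1 w = w$0 + w$1 * c1 + w$2 * c2 + w$3 * c2 + w$4 * c1"
  "vk 2 w = w$0 + w$1 * c2 + w$2 * c1 + w$3 * c1 + w$4 * c2"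
  unfolding vk_def comp5_def sum_lessThan_5
  by (simp_all add: cos_sin_fifth_turns c1_def c2_def)

lemma vtk_explicit:
  "vtk 1 w = w$1 * s1 + w$2 * s2 - w$3 * s2 - w$4 * s1"
  "vtk 2 w = w$1 * s2 - w$2 * s1 + w$3 * s1 - w$4 * s2"
  unfolding vtk_def comp5_def sum_lessThan_5
  by (simp_all add: cos_sin_fifth_turns s1_def s2_def)

lemma eplus_explicit: "eplus = (1/5) *\<^sub>R (hb 0 + hb 1 + hb 2 + hb 3 + hb 4)"
  unfolding eplus_def sum_lessThan_5 by simp

lemma ek_explicit:
  "ek 1 = (2/5) *\<^sub>R (hb 0 + c1 *\<^sub>R hb 1 + c2 *\<^sub>R hb 2 + c2 *\<^sub>R hb 3 + c1 *\<^sub>R hb 4)"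
  "ek 2 = (2/5) *\<^sub>R (hb 0 + c2 *\<^sub>R hb 1 + c1 *\<^sub>R hb 2 + c1 *\<^sub>R hb 3 + c2 *\<^sub>R hb 4)"
  unfolding ek_def sum_lessThan_5
  by (simp_all add: cos_sin_fifth_turns c1_def c2_def)

lemma etk_explicit:
  "etk 1 = (2/5) *\<^sub>R (s1 *\<^sub>R hb 1 + s2 *\<^sub>R hb 2 - s2 *\<^sub>R hb 3 - s1 *\<^sub>R hb 4)"
  "etk 2 = (2/5) *\<^sub>R (s2 *\<^sub>R hb 1 - s1 *\<^sub>R hb 2 + s1 *\<^sub>R hb 3 - s2 *\<^sub>R hb 4)"
  unfolding etk_def sum_lessThan_5
  by (simp_all add: cos_sin_fifth_turns s1_def s2_def)

lemma canonical_decomposition: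
  "w = vplus w *\<^sub>R eplus + vk 1 w *\<^sub>R ek 1 + vtk 1 w *\<^sub>R etk 1
     + vk 2 w *\<^sub>R ek 2 + vtk 2 w *\<^sub>R etk 2"
  unfolding vec_eq_iff forall_5 vplus_explicit vk_explicit vtk_explicit
    eplus_explicit ek_explicit etk_explicit
  using c1_quadratic c1_s1_pythagoras
  by (simp add: hb_nth c2_double s2_double) algebra

lemma vk_0: "vk 0 w = vplus w"
  unfolding vplus_def vk_def by simp

lemma vtk_0: "vtk 0 w = 0"
  unfolding vtk_def by simp

theorem mainTheorem8:
  fixes u :: tc5
  shows "(\<lambda>n. (1 / fact n) *\<^sub>R pow5 u n) sums
     (exp (vplus u) *\<^sub>R eplus
      + exp (vk 1 u) *\<^sub>R (cos (vtk 1 u) *\<^sub>R ek 1 + sin (vtk 1 u) *\<^sub>R etk 1)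
      + exp (vk 2 u) *\<^sub>R (cos (vtk 2 u) *\<^sub>R ek 2 + sin (vtk 2 u) *\<^sub>R etk 2))"
proof -
  let ?T = "\<lambda>n. (1 / fact n) *\<^sub>R pow5 u n"
  have "(\<lambda>n. vplus (?T n)) sums exp (vplus u)"
    using exp_series_canonical_variables(1)[of 0 u] by (simp add: vk_0 vtk_0)
  then have "(\<lambda>n. vplus (?T n) *\<^sub>R eplus + vk 1 (?T n) *\<^sub>R ek 1 + vtk 1 (?T n) *\<^sub>R etk 1
      + vk 2 (?T n) *\<^sub>R ek 2 + vtk 2 (?T n) *\<^sub>R etk 2) sums
     (exp (vplus u) *\<^sub>R eplus + (exp (vk 1 u) * cos (vtk 1 u)) *\<^sub>R ek 1
      + (exp (vk 1 u) * sin (vtk 1 u)) *\<^sub>R etk 1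
      + (exp (vk 2 u) * cos (vtk 2 u)) *\<^sub>R ek 2 + (exp (vk 2 u) * sin (vtk 2 u)) *\<^sub>R etk 2)"
    by (intro sums_add sums_scaleR_left exp_series_canonical_variables)
  then show ?thesis
    unfolding canonical_decomposition[of "?T _", symmetric]
    by (simp add: scaleR_add_right add.assoc)
qed

end
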